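(* Let $\omega$ be a primitive third root of unity, $S=\mathbb{C}\langle x,y,z\rangle/(x^2,y^2,z^2)$, and for $t\in\mathbb{C}^*$ let $T_t$ be the quotient of $S$ by the two-sided ideal generated by $(zxy+\omega xyz+\omega^2 yzx)+t(yxz+\omega zyx+\omega^2 xzy)$ and $(zxy+\omega^2 xyz+\omega yzx)+t(yxz+\omega^2 zyx+\omega xzy)$. Let $g_t=(zxy+xyz+yzx)+t(yxz+zyx+xzy)$ and $M_t=T_t/(g_t)$. Then for every $t\in\mathbb{C}^*$, the Hilbert series of $M_t$ is $\frac{1-s^3}{(1-s)^3}$.
   Context: Grading: $\deg x=\deg y=\deg z=1$. The Hilbert series is $\sum_k\dim (M_t)_k s^k$. *)

theory Defs
  imports Complex_Main "HOL-Library.Function_Algebras" "HOL-Computational_Algebra.Formal_Power_Series"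
begin

text \<open>Free associative algebra C<x,y,z>: a noncommutative polynomial is represented by
its coefficient function on words over the three generators (elements of the free algebra
are those with finite support; all polynomials occurring below have finite support).\<close>

datatype gen = X | Y | Z

type_synonym ncpoly = "gen list \<Rightarrow> complex"

definition nc_scale :: "complex \<Rightarrow> ncpoly \<Rightarrow> ncpoly" where
  "nc_scale c p = (\<lambda>w. c * p w)"

definition nc_span :: "ncpoly set \<Rightarrow> ncpoly set" where
  "nc_span = module.span nc_scale"

definition nc_dim :: "ncpoly set \<Rightarrow> nat" where
  "nc_dim = vector_space.dim nc_scale"

definition nc_mult :: "ncpoly \<Rightarrow> ncpoly \<Rightarrow> ncpoly" where
  "nc_mult p q = (\<lambda>w. \<Sum>i\<le>length w. p (take i w) * q (drop i w))"

definition mono :: "gen list \<Rightarrow> ncpoly" where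
  "mono u = (\<lambda>w. if w = u then 1 else 0)"

definition poly_of :: "(complex \<times> gen list) list \<Rightarrow> ncpoly" where
  "poly_of ts = (\<lambda>w. \<Sum>(c, u)\<leftarrow>ts. if u = w then c else 0)"

definition two_sided_ideal :: "ncpoly set \<Rightarrow> ncpoly set" where
  "two_sided_ideal G = nc_span {nc_mult (nc_mult (mono u) g) (mono v) | u g v. g \<in> G}"

definition homog :: "nat \<Rightarrow> ncpoly set" where
  "homog k = {p. \<forall>w. length w \<noteq> k \<longrightarrow> p w = 0}"

text \<open>For a homogeneous ideal I, the degree-k component of C<x,y,z>/I is
  homog k / (I \<inter> homog k); its dimension:\<close>
definition quot_graded_dim :: "ncpoly set \<Rightarrow> nat \<Rightarrow> nat" where
  "quot_graded_dim I k = nc_dim (homog k) - nc_dim (I \<inter> homog k)"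

definition hilbert_series :: "ncpoly set \<Rightarrow> rat fps" where
  "hilbert_series I = Abs_fps (\<lambda>k. of_nat (quot_graded_dim I k))"

definition rel_sq :: "ncpoly set" where
  "rel_sq = {mono [X, X], mono [Y, Y], mono [Z, Z]}"

definition rel1 :: "complex \<Rightarrow> complex \<Rightarrow> ncpoly" where
  "rel1 \<omega> t = poly_of [(1, [Z,X,Y]), (\<omega>, [X,Y,Z]), (\<omega>^2, [Y,Z,X]),
                        (t, [Y,X,Z]), (t * \<omega>, [Z,Y,X]), (t * \<omega>^2, [X,Z,Y])]"

definition rel2 :: "complex \<Rightarrow> complex \<Rightarrow> ncpoly" where
  "rel2 \<omega> t = poly_of [(1, [Z,X,Y]), (\<omega>^2, [X,Y,Z]), (\<omega>, [Y,Z,X]),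
                        (t, [Y,X,Z]), (t * \<omega>^2, [Z,Y,X]), (t * \<omega>, [X,Z,Y])]"

definition g_rel :: "complex \<Rightarrow> ncpoly" where
  "g_rel t = poly_of [(1, [Z,X,Y]), (1, [X,Y,Z]), (1, [Y,Z,X]),
                      (t, [Y,X,Z]), (t, [Z,Y,X]), (t, [X,Z,Y])]"

text \<open>M_t = T_t/(g_t) = C<x,y,z>/I_t, with I_t generated by x^2,y^2,z^2 and the three cubics.\<close>
definition M_ideal :: "complex \<Rightarrow> complex \<Rightarrow> ncpoly set" where
  "M_ideal \<omega> t = two_sided_ideal (rel_sq \<union> {rel1 \<omega> t, rel2 \<omega> t, g_rel t})"

end

theory Submission
  imports Defs "HOL-Library.Multiset"
begin

text \<open>Over the primitive cube roots of unity the two cubic relations and \<open>g\<^sub>t\<close> are, by a discrete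
  Fourier transform, equivalent to the three binomials \<open>abc + t cba\<close> with \<open>(a, b, c)\<close> a cyclic
  permutation of \<open>(x, y, z)\<close>. Thus the ideal is spanned by the monomials containing a square
  and by the binomials \<open>u (abc + t cba) v\<close>.

  Reversing such a factor \<open>abc\<close> preserves the multisets of letters at even and at odd
  positions and changes the number of cyclic pairs at even distance by one. For every such content
  in which one parity class is a single letter absent from the other class, the functional
  \<open>p \<mapsto> \<Sum>\<^sub>w (-1/t)\<^bsup>cyclic pairs of w\<^esup> p(w)\<close>, summed over the words of that content, therefore
  vanishes on the ideal. Conversely, prepending letters and bubbling them through alternating
  blocks shows that every monomial is, modulo the ideal, zero or a multiple of a normal word, the
  sorted representative of such a content. So the normal words of length \<open>k\<close> form a basis of
  the degree \<open>k\<close> component of \<open>M\<^sub>t\<close>; there are \<open>3k\<close> of them for \<open>k \<ge> 1\<close>, and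
  \<open>1 + 3s + 6s\<^sup>2 + 9s\<^sup>3 + \<dots> = (1 - s\<^sup>3)/(1 - s)\<^sup>3\<close>.\<close>

interpretation nc: vector_space nc_scale
  by unfold_locales (auto simp: nc_scale_def fun_eq_iff algebra_simps)

lemma nc_span_eq: "nc_span = nc.span"
  by (simp add: nc_span_def)

lemma nc_dim_eq: "nc_dim = nc.dim"
  by (simp add: nc_dim_def)

section \<open>Dimension count from a dual family\<close>

context vector_space
begin

lemma linear_functional_vanishes_on_span:
  assumes add: "\<And>x y. f (x + y) = f x + f y" and scale: "\<And>c x. f (c *s x) = c * f x"
    and vanish: "\<And>x. x \<in> S \<Longrightarrow> f x = 0" and x: "x \<in> span S"
  shows "f x = 0"
proof -
  have "f 0 = 0"
    using scale[of 0 0] by simp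
  then have "subspace {x. f x = 0}"
    by (simp add: subspace_def add scale)
  then show ?thesis
    using span_minimal[of S "{x. f x = 0}"] vanish x by blast
qed

lemma independent_Un_dual_family:
  assumes "independent B" and "finite N"
    and add: "\<And>i x y. i \<in> N \<Longrightarrow> \<Phi> i (x + y) = \<Phi> i x + \<Phi> i y"
    and scale: "\<And>i c x. i \<in> N \<Longrightarrow> \<Phi> i (c *s x) = c * \<Phi> i x"
    and vanish: "\<And>i x. i \<in> N \<Longrightarrow> x \<in> B \<Longrightarrow> \<Phi> i x = 0"
    and self: "\<And>i. i \<in> N \<Longrightarrow> \<Phi> i (v i) \<noteq> 0"
    and other: "\<And>i j. i \<in> N \<Longrightarrow> j \<in> N \<Longrightarrow> j \<noteq> i \<Longrightarrow> \<Phi> i (v j) = 0"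
  shows "independent (B \<union> v ` N)"
proof -
  have "independent (B \<union> v ` S)" if "S \<subseteq> N" for S
  proof -
    have "finite S"
      using that assms(2) finite_subset by blast
    then show ?thesis
      using that
    proof (induction S rule: finite_induct)
      case empty
      then show ?case
        using assms(1) by simp
    next
      case (insert i S)
      have i: "i \<in> N" and S: "S \<subseteq> N" "i \<notin> S"
        using insert by auto
      have "\<Phi> i x = 0" if "x \<in> span (B \<union> v ` S)" for x
      proof (rule linear_functional_vanishes_on_span[OF _ _ _ that])
        show "\<Phi> i (x + y) = \<Phi> i x + \<Phi> i y" for x y
          using add i .
        show "\<Phi> i (c *s x) = c * \<Phi> i x" for c x
          using scale i .
        show "\<Phi> i x = 0" if "x \<in> B \<union> v ` S" for x
          using that vanish[OF i] other[OF i] S by blast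
      qed
      then have "v i \<notin> span (B \<union> v ` S)"
        using self insert by blast
      then show ?case
        using insert by (simp add: independent_insertI)
    qed
  qed
  then show ?thesis
    by blast
qed

text \<open>For any basis \<open>B\<close> of \<open>J \<inter> H\<close>, the dual family makes \<open>B \<union> v ` N\<close> a basis of \<open>H\<close>.\<close>
lemma dim_eq_dim_inter_add_card:
  assumes "subspace H" and "subspace J" and "finite N" and "finite W"
    and "v ` N \<subseteq> H" and "H \<subseteq> span W" and "H \<subseteq> span (J \<union> v ` N)"
    and add: "\<And>i x y. i \<in> N \<Longrightarrow> \<Phi> i (x + y) = \<Phi> i x + \<Phi> i y"
    and scale: "\<And>i c x. i \<in> N \<Longrightarrow> \<Phi> i (c *s x) = c * \<Phi> i x"
    and vanish: "\<And>i x. i \<in> N \<Longrightarrow> x \<in> J \<Longrightarrow> \<Phi> i x = 0"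
    and self: "\<And>i. i \<in> N \<Longrightarrow> \<Phi> i (v i) \<noteq> 0"
    and other: "\<And>i j. i \<in> N \<Longrightarrow> j \<in> N \<Longrightarrow> j \<noteq> i \<Longrightarrow> \<Phi> i (v j) = 0"
  shows "dim H = dim (J \<inter> H) + card N"
proof -
  obtain B where B: "B \<subseteq> J \<inter> H" "independent B" "J \<inter> H \<subseteq> span B" "card B = dim (J \<inter> H)"
    using basis_exists by blast
  have "finite B"
    using independent_span_bound[of W B] assms(4,6) B(1,2) by auto
  have independent: "independent (B \<union> v ` N)"
    by (rule independent_Un_dual_family[OF B(2) assms(3) add scale _ self other])
      (use B(1) vanish in auto)
  have "H \<subseteq> span (B \<union> v ` N)"
  proof
    fix p assume "p \<in> H"
    then obtain x y where xy: "p = x + y" "x \<in> span J" "y \<in> span (v ` N)"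
      using assms(7) span_Un by blast
    have "y \<in> H"
      using xy(3) assms(1,5) span_minimal by blast
    moreover have "x \<in> J"
      using xy(2) assms(2) span_eq_iff by blast
    ultimately have "x \<in> J \<inter> H"
      using xy(1) \<open>p \<in> H\<close> assms(1) subspace_diff[of H p y] by simp
    then show "p \<in> span (B \<union> v ` N)"
      using xy B(3) span_mono[of B "B \<union> v ` N"] span_mono[of "v ` N" "B \<union> v ` N"]
      by (auto intro: span_add)
  qed
  then have "card (B \<union> v ` N) = dim H"
    using basis_card_eq_dim[of "B \<union> v ` N" H] independent B(1) assms(5) by auto
  moreover have "B \<inter> v ` N = {}"
    using B(1) vanish self by fastforce
  moreover have "inj_on v N"
    using self other by (metis inj_onI)
  ultimately show ?thesis
    using \<open>finite B\<close> assms(3) B(4) by (simp add: card_Un_disjoint card_image)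
qed

end

definition sandwich :: "gen list \<Rightarrow> ncpoly \<Rightarrow> gen list \<Rightarrow> ncpoly" where
  "sandwich u p v = nc_mult (nc_mult (mono u) p) (mono v)"

lemma nc_mult_mono_left:
  "nc_mult (mono u) p w = (if take (length u) w = u then p (drop (length u) w) else 0)"
proof -
  have "nc_mult (mono u) p w
      = (\<Sum>i\<le>length w. if i = length u
                        then if take (length u) w = u then p (drop (length u) w) else 0 else 0)"
    unfolding nc_mult_def by (rule sum.cong) (auto simp: mono_def)
  then show ?thesis
    by (auto simp: sum.delta)
qed

lemma nc_mult_mono_right:
  "nc_mult p (mono v) w =
     (if length v \<le> length w \<and> drop (length w - length v) w = v
      then p (take (length w - length v) w) else 0)"
proof -
  have "nc_mult p (mono v) w
      = (\<Sum>i\<le>length w. if i = length w - length v \<and> length v \<le> length w \<and>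
                           drop (length w - length v) w = v
                        then p (take (length w - length v) w) else 0)"
    unfolding nc_mult_def by (rule sum.cong) (auto simp: mono_def)
  then show ?thesis
    by (auto simp: sum.delta')
qed

lemma module_hom_sandwich: "module_hom nc_scale nc_scale (\<lambda>p. sandwich u p v)"
proof -
  have "sandwich u (p + q) v = sandwich u p v + sandwich u q v"
    and "sandwich u (nc_scale c p) v = nc_scale c (sandwich u p v)" for c p q
    by (simp_all add: sandwich_def nc_mult_mono_left nc_mult_mono_right fun_eq_iff nc_scale_def)
  then show ?thesis
    by (simp add: module_hom_def module_hom_axioms_def nc.module_axioms)
qed

lemma sandwich_mono: "sandwich u (mono m) v = mono (u @ m @ v)"
proof
  fix w :: "gen list"
  let ?k = "length w - length v"
  have "w = u @ m @ v \<longleftrightarrow> length v \<le> length w \<and> drop ?k w = v \<and>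
      take (length u) (take ?k w) = u \<and> drop (length u) (take ?k w) = m"
    using append_take_drop_id[of ?k w] append_take_drop_id[of "length u" "take ?k w"]
    by (auto simp del: append_take_drop_id) (metis append.assoc)
  then show "sandwich u (mono m) v w = mono (u @ m @ v) w"
    unfolding sandwich_def nc_mult_mono_right[of "nc_mult (mono u) (mono m)"] nc_mult_mono_left
    by (simp add: mono_def)
qed

lemmas sandwich_add = module_hom.add[OF module_hom_sandwich]
lemmas sandwich_scale = module_hom.scale[OF module_hom_sandwich]

lemma sandwich_span:
  assumes "\<And>x. x \<in> S \<Longrightarrow> sandwich u x v \<in> S" and "x \<in> nc.span S"
  shows "sandwich u x v \<in> nc.span S"
proof -
  have "sandwich u x v \<in> (\<lambda>p. sandwich u p v) ` nc.span S"
    using assms(2) by blast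
  also have "\<dots> = nc.span ((\<lambda>p. sandwich u p v) ` S)"
    by (rule module_hom.span_image[OF module_hom_sandwich, symmetric])
  also have "\<dots> \<subseteq> nc.span S"
    using assms(1) by (intro nc.span_mono) blast
  finally show ?thesis .
qed

section \<open>The defining ideal as a span of monomials and binomials\<close>

fun gen_next :: "gen \<Rightarrow> gen" where
  "gen_next X = Y" | "gen_next Y = Z" | "gen_next Z = X"

definition cyclic :: "gen \<Rightarrow> gen \<Rightarrow> gen \<Rightarrow> bool" where
  "cyclic a b c \<longleftrightarrow> b = gen_next a \<and> c = gen_next b"

definition swap_binomial :: "complex \<Rightarrow> gen list \<Rightarrow> gen \<Rightarrow> gen \<Rightarrow> gen \<Rightarrow> gen list \<Rightarrow> ncpoly" where
  "swap_binomial t u a b c v = mono (u @ [a, b, c] @ v) + nc_scale t (mono (u @ [c, b, a] @ v))"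

definition swap_relations :: "complex \<Rightarrow> ncpoly set" where
  "swap_relations t = {mono (u @ [a, a] @ v) | u a v. True} \<union>
     {swap_binomial t u a b c v | u a b c v. cyclic a b c}"

lemma sandwich_swap_binomial:
  "sandwich u' (swap_binomial t u a b c v) v' = swap_binomial t (u' @ u) a b c (v @ v')"
  by (simp add: swap_binomial_def sandwich_add sandwich_scale sandwich_mono)

lemma sandwich_swap_relations_span:
  "x \<in> nc.span (swap_relations t) \<Longrightarrow> sandwich u x v \<in> nc.span (swap_relations t)"
proof (rule sandwich_span)
  fix y assume "y \<in> swap_relations t"
  then consider u' a v' where "y = mono (u' @ [a, a] @ v')"
    | u' a b c v' where "y = swap_binomial t u' a b c v'" "cyclic a b c"
    unfolding swap_relations_def by blast
  then show "sandwich u y v \<in> swap_relations t"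
  proof cases
    case (1 u' a v')
    then have "sandwich u y v = mono ((u @ u') @ [a, a] @ (v' @ v))"
      by (simp add: sandwich_mono)
    then show ?thesis
      unfolding swap_relations_def by blast
  next
    case (2 u' a b c v')
    then have "sandwich u y v = swap_binomial t (u @ u') a b c (v' @ v)"
      by (simp add: sandwich_swap_binomial)
    then show ?thesis
      using 2(2) unfolding swap_relations_def by blast
  qed
qed

lemma cube_root_unity_sum:
  fixes \<omega> :: complex
  assumes "\<omega> ^ 3 = 1" and "\<omega> \<noteq> 1"
  shows "1 + \<omega> + \<omega>\<^sup>2 = 0"
proof -
  have "(\<omega> - 1) * (1 + \<omega> + \<omega>\<^sup>2) = \<omega> ^ 3 - 1"
    by (simp add: algebra_simps power2_eq_square power3_eq_cube)
  then show ?thesis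
    using assms by simp
qed

lemma cube_root_unity_inversion:
  fixes \<omega> b c d :: complex
  assumes "\<omega> ^ 3 = 1" and "\<omega> \<noteq> 1"
  shows "(b + \<omega> * c + \<omega>\<^sup>2 * d) + (b + \<omega>\<^sup>2 * c + \<omega> * d) + (b + c + d) = 3 * b"
    and "\<omega>\<^sup>2 * (b + \<omega> * c + \<omega>\<^sup>2 * d) + \<omega> * (b + \<omega>\<^sup>2 * c + \<omega> * d) + (b + c + d) = 3 * c"
    and "\<omega> * (b + \<omega> * c + \<omega>\<^sup>2 * d) + \<omega>\<^sup>2 * (b + \<omega>\<^sup>2 * c + \<omega> * d) + (b + c + d) = 3 * d"
  using cube_root_unity_sum[OF assms] assms(1) by algebra+

lemma rel1_eq:
  "rel1 \<omega> t = swap_binomial t [] Z X Y [] + nc_scale \<omega> (swap_binomial t [] X Y Z [])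
     + nc_scale (\<omega>\<^sup>2) (swap_binomial t [] Y Z X [])"
  by (auto simp: fun_eq_iff poly_of_def rel1_def swap_binomial_def mono_def nc_scale_def
      algebra_simps)

lemma rel2_eq:
  "rel2 \<omega> t = swap_binomial t [] Z X Y [] + nc_scale (\<omega>\<^sup>2) (swap_binomial t [] X Y Z [])
     + nc_scale \<omega> (swap_binomial t [] Y Z X [])"
  by (auto simp: fun_eq_iff poly_of_def rel2_def swap_binomial_def mono_def nc_scale_def
      algebra_simps)

lemma g_rel_eq:
  "g_rel t = swap_binomial t [] Z X Y [] + swap_binomial t [] X Y Z []
     + swap_binomial t [] Y Z X []"
  by (auto simp: fun_eq_iff poly_of_def g_rel_def swap_binomial_def mono_def nc_scale_def
      algebra_simps)

lemma M_ideal_eq_span_sandwich: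
  "M_ideal \<omega> t = nc.span {sandwich u g v | u g v. g \<in> rel_sq \<union> {rel1 \<omega> t, rel2 \<omega> t, g_rel t}}"
  by (simp add: M_ideal_def two_sided_ideal_def nc_span_eq sandwich_def)

lemma swap_binomial_in_M_ideal:
  assumes "\<omega> ^ 3 = 1" and "\<omega> \<noteq> 1" and "cyclic a b c"
  shows "swap_binomial t u a b c v \<in> M_ideal \<omega> t"
proof -
  let ?I = "M_ideal \<omega> t"
  have in_I: "sandwich u g v \<in> ?I" if "g \<in> rel_sq \<union> {rel1 \<omega> t, rel2 \<omega> t, g_rel t}" for g
    unfolding M_ideal_eq_span_sandwich by (rule nc.span_base) (use that in blast)
  define p q r where "p = sandwich u (rel1 \<omega> t) v" and "q = sandwich u (rel2 \<omega> t) v"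
    and "r = sandwich u (g_rel t) v"
  have pqr: "p \<in> ?I" "q \<in> ?I" "r \<in> ?I"
    unfolding p_def q_def r_def by (auto intro: in_I)
  have pqr_eq: "p = swap_binomial t u Z X Y v + nc_scale \<omega> (swap_binomial t u X Y Z v)
      + nc_scale (\<omega>\<^sup>2) (swap_binomial t u Y Z X v)"
    "q = swap_binomial t u Z X Y v + nc_scale (\<omega>\<^sup>2) (swap_binomial t u X Y Z v)
      + nc_scale \<omega> (swap_binomial t u Y Z X v)"
    "r = swap_binomial t u Z X Y v + swap_binomial t u X Y Z v + swap_binomial t u Y Z X v"
    unfolding p_def q_def r_def rel1_eq rel2_eq g_rel_eq
    by (simp_all add: sandwich_add sandwich_scale sandwich_swap_binomial)
  have "swap_binomial t u Z X Y v = nc_scale (1/3) (p + q + r)"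
    and "swap_binomial t u X Y Z v = nc_scale (1/3) (nc_scale (\<omega>\<^sup>2) p + nc_scale \<omega> q + r)"
    and "swap_binomial t u Y Z X v = nc_scale (1/3) (nc_scale \<omega> p + nc_scale (\<omega>\<^sup>2) q + r)"
    unfolding pqr_eq fun_eq_iff nc_scale_def plus_fun_def
    by (simp_all only: cube_root_unity_inversion[OF assms(1,2)]) simp_all
  moreover have "(a, b, c) \<in> {(Z, X, Y), (X, Y, Z), (Y, Z, X)}"
    using assms(3) by (cases a) (auto simp: cyclic_def)
  ultimately show ?thesis
    using pqr by (auto intro!: nc.span_add nc.span_scale simp: M_ideal_eq_span_sandwich)
qed

lemma M_ideal_eq_span_swap_relations:
  assumes "\<omega> ^ 3 = 1" and "\<omega> \<noteq> 1"
  shows "M_ideal \<omega> t = nc.span (swap_relations t)"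
proof
  let ?G = "rel_sq \<union> {rel1 \<omega> t, rel2 \<omega> t, g_rel t}"
  note I = M_ideal_eq_span_sandwich[of \<omega> t]
  have binomial: "swap_binomial t [] a b c [] \<in> nc.span (swap_relations t)"
    if "cyclic a b c" for a b c
    using that unfolding swap_relations_def by (intro nc.span_base) blast
  have square: "mono [a, a] \<in> nc.span (swap_relations t)" for a
  proof -
    have "mono ([] @ [a, a] @ []) \<in> swap_relations t"
      unfolding swap_relations_def by blast
    then show ?thesis
      by (simp add: nc.span_base)
  qed
  have "cyclic Z X Y" "cyclic X Y Z" "cyclic Y Z X"
    by (simp_all add: cyclic_def)
  then have "g \<in> nc.span (swap_relations t)" if "g \<in> ?G" for g
    using that unfolding rel_sq_def rel1_eq rel2_eq g_rel_eq
    by (elim UnE insertE emptyE) (simp_all add: square binomial nc.span_add nc.span_scale)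
  then show "M_ideal \<omega> t \<subseteq> nc.span (swap_relations t)"
    unfolding I by (intro nc.span_minimal) (auto intro: sandwich_swap_relations_span)
  have "swap_relations t \<subseteq> M_ideal \<omega> t"
  proof
    fix x assume "x \<in> swap_relations t"
    then consider u a v where "x = mono (u @ [a, a] @ v)"
      | u a b c v where "x = swap_binomial t u a b c v" "cyclic a b c"
      unfolding swap_relations_def by blast
    then show "x \<in> M_ideal \<omega> t"
    proof cases
      case (1 u a v)
      have "sandwich u (mono [a, a]) v \<in> M_ideal \<omega> t"
        unfolding I by (rule nc.span_base) (cases a; force simp: rel_sq_def)
      then show ?thesis
        using 1 by (simp add: sandwich_mono)
    qed (simp add: swap_binomial_in_M_ideal assms)
  qed
  then show "nc.span (swap_relations t) \<subseteq> M_ideal \<omega> t"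
    unfolding I by (intro nc.span_minimal nc.subspace_span)
qed

section \<open>Combinatorics of words\<close>

fun rank :: "gen \<Rightarrow> nat" where
  "rank X = 0" | "rank Y = 1" | "rank Z = 2"

lemma inj_rank: "inj rank"
  by (rule injI) (case_tac x; case_tac y; simp)

lemma rank_eq_iff [simp]: "rank a = rank b \<longleftrightarrow> a = b"
  using inj_rank by (auto dest: injD)

lemma UNIV_gen: "(UNIV :: gen set) = {X, Y, Z}"
  using gen.exhaust by auto

fun evens :: "gen list \<Rightarrow> gen list" and odds :: "gen list \<Rightarrow> gen list" where
  "evens [] = []" | "evens (a # w) = a # odds w"
| "odds [] = []" | "odds (a # w) = evens w"

definition parity_content :: "gen list \<Rightarrow> gen multiset \<times> gen multiset" where
  "parity_content w = (mset (evens w), mset (odds w))"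

lemma evens_odds_inject: "evens w = evens w' \<Longrightarrow> odds w = odds w' \<Longrightarrow> w = w'"
proof (induction w arbitrary: w')
  case Nil
  then show ?case by (cases w') auto
next
  case (Cons a w)
  then show ?case by (cases w') auto
qed

lemma evens_odds_append:
  "evens (u @ v) = evens u @ (if even (length u) then evens v else odds v) \<and>
   odds (u @ v) = odds u @ (if even (length u) then odds v else evens v)"
  by (induction u) auto

lemma parity_content_swap: "parity_content (u @ [a, b, c] @ v) = parity_content (u @ [c, b, a] @ v)"
  by (simp add: parity_content_def evens_odds_append)

text \<open>The number of pairs of positions \<open>i < j\<close> with \<open>j - i\<close> even and \<open>w\<^sub>j\<close> the cyclic
  successor of \<open>w\<^sub>i\<close>.\<close>
fun cyclic_pairs :: "gen list \<Rightarrow> nat" where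
  "cyclic_pairs [] = 0"
| "cyclic_pairs (a # w) = count_list (odds w) (gen_next a) + cyclic_pairs w"

lemma cyclic_pairs_swap:
  assumes "cyclic a b c"
  shows "cyclic_pairs (u @ [c, b, a] @ v) = Suc (cyclic_pairs (u @ [a, b, c] @ v))"
proof (induction u)
  case Nil
  from assms have "gen_next c = a" "a \<noteq> b" "b \<noteq> c" "a \<noteq> c" "b = gen_next a" "c = gen_next b"
    by (cases a; simp add: cyclic_def)+
  then show ?case by simp
next
  case (Cons x u)
  have "mset (odds (u @ [c, b, a] @ v)) = mset (odds (u @ [a, b, c] @ v))"
    using parity_content_swap[of u a b c v] by (simp add: parity_content_def)
  then have "count_list (odds (u @ [c, b, a] @ v)) (gen_next x)
      = count_list (odds (u @ [a, b, c] @ v)) (gen_next x)"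
    by (metis count_mset)
  then show ?case
    using Cons by simp
qed

fun square_free :: "gen list \<Rightarrow> bool" where
  "square_free (a # b # w) = (a \<noteq> b \<and> square_free (b # w))"
| "square_free _ = True"

lemma square_free_Cons: "square_free (x # w) \<Longrightarrow> square_free w"
  by (cases w) auto

lemma not_square_free_square: "\<not> square_free (u @ [a, a] @ v)"
  by (induction u) (auto dest: square_free_Cons)

definition separated :: "gen list \<Rightarrow> bool" where
  "separated w \<longleftrightarrow> (\<exists>b. set (evens w) \<subseteq> {b} \<and> b \<notin> set (odds w) \<or>
                         set (odds w) \<subseteq> {b} \<and> b \<notin> set (evens w))"

lemma separated_square_free: "separated w \<Longrightarrow> square_free w"
proof (induction w rule: square_free.induct)
  case (1 a c w)
  then obtain b where
    "set (evens (a # c # w)) \<subseteq> {b} \<and> b \<notin> set (odds (a # c # w)) \<or>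
     set (odds (a # c # w)) \<subseteq> {b} \<and> b \<notin> set (evens (a # c # w))"
    unfolding separated_def by blast
  then have "separated (c # w)" and "a \<noteq> c"
    unfolding separated_def by auto
  then show ?case
    using "1.IH" by simp
qed auto

lemma parity_content_separated:
  "parity_content w = parity_content r \<Longrightarrow> separated w = separated r"
  by (simp add: parity_content_def separated_def) (metis set_mset_mset)

fun alt_word :: "gen \<Rightarrow> gen \<Rightarrow> nat \<Rightarrow> gen list" where
  "alt_word a b 0 = []" | "alt_word a b (Suc n) = a # alt_word b a n"

lemma length_alt_word [simp]: "length (alt_word a b n) = n"
  by (induction n arbitrary: a b) auto

lemma alt_word_add:
  "alt_word a b (m + n) = alt_word a b m @ (if even m then alt_word a b n else alt_word b a n)"
  by (induction m arbitrary: a b) auto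

lemma set_evens_odds_alt_word:
  "set (evens (alt_word a b n)) \<subseteq> {a} \<and> set (odds (alt_word a b n)) \<subseteq> {b}"
  by (induction n arbitrary: a b) auto

fun alternating :: "gen list \<Rightarrow> bool" where
  "alternating (a # b # c # w) = (a = c \<and> alternating (b # c # w))"
| "alternating _ = True"

lemma alternating_eq_alt_word:
  "alternating (a # b # w) \<Longrightarrow> a # b # w = alt_word a b (length w + 2)"
proof (induction w arbitrary: a b)
  case Nil
  then show ?case by (simp add: numeral_2_eq_2)
next
  case (Cons c w)
  then have "b # c # w = alt_word b c (length w + 2)"
    by simp
  then show ?case
    using Cons.prems by (simp add: numeral_2_eq_2)
qed

text \<open>Normal words are square free and either alternating, or of the shape \<open>(ab)\<^sup>j\<close> followed by
  an alternating word in \<open>c, b\<close>, or \<open>a(ba)\<^sup>j\<close> followed by one in \<open>c, a\<close>, where \<open>rank a < rank c\<close>.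
  Equivalently, one parity class is a single letter and the other one is sorted by rank.\<close>
fun normal :: "gen list \<Rightarrow> bool" where
  "normal [] = True"
| "normal [a] = True"
| "normal [a, b] = (a \<noteq> b)"
| "normal (a # b # c # w) = (normal (b # c # w) \<and>
     (a = c \<or> a \<noteq> b \<and> a \<noteq> c \<and> alternating (b # c # w) \<and> rank a < rank c))"

lemma normal_Cons: "normal (a # w) \<Longrightarrow> normal w"
  by (cases w rule: normal.cases) auto

lemma normal_hd_neq: "normal (a # b # w) \<Longrightarrow> a \<noteq> b"
proof (induction w arbitrary: a b)
  case (Cons c w)
  then have "b \<noteq> c"
    by simp
  then show ?case
    using Cons.prems by auto
qed auto

lemma normal_alt_word: "a \<noteq> b \<Longrightarrow> normal (alt_word a b n) \<and> alternating (alt_word a b n)"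
proof (induction n arbitrary: a b)
  case (Suc n)
  then have "normal (alt_word b a n) \<and> alternating (alt_word b a n)"
    by simp
  with Suc.prems show ?case
    by (cases n; cases "n - 1") auto
qed simp

lemma normal_separated: "normal w \<Longrightarrow> separated w"
proof (induction w rule: normal.induct)
  case (2 a)
  have "(if a = X then Y else X) \<noteq> a"
    by auto
  then show ?case
    unfolding separated_def by (intro exI[of _ "if a = X then Y else X"]) auto
next
  case (3 a b)
  then show ?case
    unfolding separated_def by (intro exI[of _ b]) auto
next
  case (4 a b c w)
  let ?w = "b # c # w"
  show ?case
  proof (cases "a = c")
    case True
    from 4 obtain d where
      "set (evens ?w) \<subseteq> {d} \<and> d \<notin> set (odds ?w) \<or> set (odds ?w) \<subseteq> {d} \<and> d \<notin> set (evens ?w)"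
      unfolding separated_def by auto
    then show ?thesis
      unfolding separated_def using True
      by (intro exI[of _ d])
        (auto simp del: evens.simps odds.simps simp: evens.simps(2) odds.simps(2))
  next
    case False
    with 4 have "a \<noteq> b" "a \<noteq> c" "alternating ?w" "b \<noteq> c"
      using normal_hd_neq by auto
    moreover have "set (evens ?w) \<subseteq> {b}" "set (odds ?w) \<subseteq> {c}"
      using alternating_eq_alt_word[OF \<open>alternating ?w\<close>] set_evens_odds_alt_word by metis+
    ultimately show ?thesis
      unfolding separated_def
      by (intro exI[of _ b])
        (auto simp del: evens.simps odds.simps simp: evens.simps(2) odds.simps(2))
  qed
qed (auto simp: separated_def)

lemma normal_sorted: "normal w \<Longrightarrow> sorted (map rank (evens w)) \<and> sorted (map rank (odds w))"
proof (induction w rule: normal.induct)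
  case (4 a b c w)
  then have "sorted (map rank (evens (b # c # w)))" "sorted (map rank (c # odds w))"
    "rank a \<le> rank c"
    by auto
  then show ?case
    by (auto intro: order.trans)
qed auto

lemma normal_unique:
  assumes "normal w" and "normal w'" and "parity_content w = parity_content w'"
  shows "w = w'"
proof -
  have "map rank xs = map rank ys"
    if "sorted (map rank xs)" "sorted (map rank ys)" "mset xs = mset ys" for xs ys
    using that by (metis mset_map properties_for_sort)
  then have "evens w = evens w'" "odds w = odds w'"
    using assms normal_sorted[of w] normal_sorted[of w'] inj_rank
    by (auto simp: parity_content_def inj_map_eq_map)
  then show ?thesis
    by (rule evens_odds_inject)
qed

section \<open>Linear functionals vanishing on the ideal\<close>

definition words :: "nat \<Rightarrow> gen list set" where
  "words k = {w. length w = k}"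

lemma finite_words: "finite (words k)"
proof -
  have "finite (UNIV :: gen set)"
    by (simp add: UNIV_gen)
  then show ?thesis
    using finite_lists_length_eq[of "UNIV :: gen set" k] by (simp add: words_def)
qed

definition swap_weight :: "complex \<Rightarrow> gen list \<Rightarrow> gen list \<Rightarrow> complex" where
  "swap_weight t r w =
     (if parity_content w = parity_content r then (- 1 / t) ^ cyclic_pairs w else 0)"

definition dual_functional :: "complex \<Rightarrow> gen list \<Rightarrow> ncpoly \<Rightarrow> complex" where
  "dual_functional t r p = (\<Sum>w\<in>words (length r). swap_weight t r w * p w)"

lemma dual_functional_add:
  "dual_functional t r (p + q) = dual_functional t r p + dual_functional t r q"
  by (simp add: dual_functional_def algebra_simps sum.distrib)

lemma dual_functional_scale: "dual_functional t r (nc_scale c p) = c * dual_functional t r p"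
  by (simp add: dual_functional_def nc_scale_def sum_distrib_left algebra_simps)

lemma dual_functional_mono:
  "dual_functional t r (mono w) = (if length w = length r then swap_weight t r w else 0)"
proof -
  have "dual_functional t r (mono w)
      = (\<Sum>w'\<in>words (length r). if w' = w then swap_weight t r w' else 0)"
    unfolding dual_functional_def by (rule sum.cong) (auto simp: mono_def)
  then show ?thesis
    using finite_words by (simp add: words_def)
qed

lemma dual_functional_swap_relations:
  assumes "t \<noteq> 0" and "separated r" and "x \<in> swap_relations t"
  shows "dual_functional t r x = 0"
proof -
  from assms(3) consider u a v where "x = mono (u @ [a, a] @ v)"
    | u a b c v where "x = swap_binomial t u a b c v" "cyclic a b c"
    unfolding swap_relations_def by blast
  then show ?thesis
  proof cases
    case (1 u a v)
    have "parity_content (u @ [a, a] @ v) \<noteq> parity_content r"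
      using assms(2) parity_content_separated separated_square_free not_square_free_square by blast
    then show ?thesis
      using 1 by (simp add: dual_functional_mono swap_weight_def)
  next
    case (2 u a b c v)
    let ?w = "u @ [a, b, c] @ v" and ?w' = "u @ [c, b, a] @ v"
    have "swap_weight t r ?w + t * swap_weight t r ?w' = 0"
    proof (cases "parity_content ?w = parity_content r")
      case True
      have "(- 1 / t) ^ cyclic_pairs ?w + t * (- 1 / t) ^ Suc (cyclic_pairs ?w) = 0"
        using assms(1) by simp
      then show ?thesis
        using True parity_content_swap[of u a b c v] cyclic_pairs_swap[OF 2(2), of u v]
        by (simp add: swap_weight_def)
    qed (use parity_content_swap[of u a b c v] in \<open>simp add: swap_weight_def\<close>)
    then show ?thesis
      using 2(1) by (simp add: swap_binomial_def dual_functional_add dual_functional_scale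
          dual_functional_mono)
  qed
qed

lemma dual_functional_span_swap_relations:
  "t \<noteq> 0 \<Longrightarrow> separated r \<Longrightarrow> x \<in> nc.span (swap_relations t) \<Longrightarrow> dual_functional t r x = 0"
  by (rule nc.linear_functional_vanishes_on_span[OF dual_functional_add dual_functional_scale])
    (auto intro: dual_functional_swap_relations)

lemma dual_functional_self: "t \<noteq> 0 \<Longrightarrow> dual_functional t r (mono r) \<noteq> 0"
  by (simp add: dual_functional_mono swap_weight_def)

lemma dual_functional_normal:
  "normal r \<Longrightarrow> normal r' \<Longrightarrow> r' \<noteq> r \<Longrightarrow> dual_functional t r (mono r') = 0"
  using normal_unique by (auto simp: dual_functional_mono swap_weight_def)

section \<open>Reduction of monomials to normal words\<close>

definition reduces_to :: "complex \<Rightarrow> gen list \<Rightarrow> gen list \<Rightarrow> bool" where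
  "reduces_to t w r \<longleftrightarrow> (\<exists>\<sigma>. mono w - nc_scale \<sigma> (mono r) \<in> nc.span (swap_relations t))"

lemma reduces_to_refl: "reduces_to t w w"
proof -
  have "mono w - nc_scale 1 (mono w) = 0"
    by (simp add: nc_scale_def)
  then show ?thesis
    unfolding reduces_to_def by (metis nc.span_zero)
qed

lemma reduces_to_trans: "reduces_to t x y \<Longrightarrow> reduces_to t y z \<Longrightarrow> reduces_to t x z"
proof -
  assume "reduces_to t x y" "reduces_to t y z"
  then obtain \<sigma> \<tau> where
    "mono x - nc_scale \<sigma> (mono y) \<in> nc.span (swap_relations t)"
    "mono y - nc_scale \<tau> (mono z) \<in> nc.span (swap_relations t)"
    unfolding reduces_to_def by blast
  moreover have "mono x - nc_scale (\<sigma> * \<tau>) (mono z)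
      = (mono x - nc_scale \<sigma> (mono y)) + nc_scale \<sigma> (mono y - nc_scale \<tau> (mono z))"
    by (simp add: nc_scale_def fun_eq_iff algebra_simps)
  ultimately show ?thesis
    unfolding reduces_to_def by (metis nc.span_add nc.span_scale)
qed

lemma reduces_to_span:
  "reduces_to t w r \<Longrightarrow> mono r \<in> nc.span (swap_relations t) \<Longrightarrow> mono w \<in> nc.span (swap_relations t)"
  unfolding reduces_to_def
  by (metis diff_add_cancel nc.span_add nc.span_scale)

lemma mono_Cons_span:
  "mono w \<in> nc.span (swap_relations t) \<Longrightarrow> mono (l # w) \<in> nc.span (swap_relations t)"
  using sandwich_swap_relations_span[of "mono w" t "[l]" "[]"] by (simp add: sandwich_mono)

lemma reduces_to_Cons: "reduces_to t w r \<Longrightarrow> reduces_to t (l # w) (l # r)"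
proof -
  assume "reduces_to t w r"
  then obtain \<sigma> where "mono w - nc_scale \<sigma> (mono r) \<in> nc.span (swap_relations t)"
    unfolding reduces_to_def by blast
  then have "sandwich [l] (mono w - nc_scale \<sigma> (mono r)) [] \<in> nc.span (swap_relations t)"
    by (rule sandwich_swap_relations_span)
  then show ?thesis
    unfolding reduces_to_def
    by (auto simp: module_hom.diff[OF module_hom_sandwich] sandwich_scale sandwich_mono)
qed

lemma square_in_span: "mono (u @ [a, a] @ v) \<in> nc.span (swap_relations t)"
  by (rule nc.span_base) (auto simp: swap_relations_def)

lemma distinct_cyclic: "a \<noteq> b \<Longrightarrow> b \<noteq> c \<Longrightarrow> a \<noteq> c \<Longrightarrow> cyclic c a b \<or> cyclic b a c"
  by (cases a; cases b; cases c; simp add: cyclic_def)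

text \<open>One of the two orientations of three distinct letters is cyclic, and the binomial relation
  can be divided by the unit \<open>t\<close>, so either orientation may be rewritten into the other.\<close>
lemma reduces_to_swap:
  assumes "t \<noteq> 0" and "a \<noteq> b" "b \<noteq> c" "a \<noteq> c"
  shows "reduces_to t (u @ [c, a, b] @ v) (u @ [b, a, c] @ v)"
proof (cases "cyclic c a b")
  case True
  then have "swap_binomial t u c a b v \<in> nc.span (swap_relations t)"
    unfolding swap_relations_def by (intro nc.span_base) blast
  moreover have "swap_binomial t u c a b v
      = mono (u @ [c, a, b] @ v) - nc_scale (- t) (mono (u @ [b, a, c] @ v))"
    by (simp add: swap_binomial_def nc_scale_def fun_eq_iff)
  ultimately show ?thesis
    unfolding reduces_to_def by metis
next
  case False
  then have "cyclic b a c"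
    using distinct_cyclic assms by blast
  then have "nc_scale (1 / t) (swap_binomial t u b a c v) \<in> nc.span (swap_relations t)"
    unfolding swap_relations_def by (intro nc.span_scale nc.span_base) blast
  moreover have "nc_scale (1 / t) (swap_binomial t u b a c v)
      = mono (u @ [c, a, b] @ v) - nc_scale (- 1 / t) (mono (u @ [b, a, c] @ v))"
    using assms(1) by (simp add: swap_binomial_def nc_scale_def fun_eq_iff algebra_simps)
  ultimately show ?thesis
    unfolding reduces_to_def by metis
qed

lemma reduces_to_bubble:
  assumes "t \<noteq> 0" and "a \<noteq> b" "b \<noteq> c" "a \<noteq> c"
  shows "reduces_to t (u @ c # alt_word a b (2 * n) @ w) (u @ alt_word b a (2 * n) @ c # w)"
proof (induction n arbitrary: u)
  case 0
  then show ?case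
    by (simp add: reduces_to_refl)
next
  case (Suc n)
  have "reduces_to t (u @ [c, a, b] @ alt_word a b (2 * n) @ w)
      (u @ [b, a, c] @ alt_word a b (2 * n) @ w)"
    by (rule reduces_to_swap[OF assms])
  moreover have "reduces_to t ((u @ [b, a]) @ c # alt_word a b (2 * n) @ w)
      ((u @ [b, a]) @ alt_word b a (2 * n) @ c # w)"
    by (rule Suc.IH)
  ultimately show ?case
    by (simp add: reduces_to_trans)
qed

lemma third_letter_unique:
  "(l::gen) \<noteq> a \<Longrightarrow> l \<noteq> b \<Longrightarrow> c \<noteq> a \<Longrightarrow> c \<noteq> b \<Longrightarrow> a \<noteq> b \<Longrightarrow> l = c"
  by (cases l; cases a; cases b; cases c; simp)

lemma normal_bubbled:
  assumes "a \<noteq> b" "b \<noteq> c" "a \<noteq> c" and "rank b < rank c" and "1 \<le> n"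
  shows "normal (alt_word b a (2 * n) @ c # alt_word a c e)"
  using assms(5)
proof (induction n rule: dec_induct)
  case base
  have "normal (alt_word a c (Suc (Suc e))) \<and> alternating (alt_word a c (Suc (Suc e)))"
    using normal_alt_word assms(3) by blast
  then show ?case
    using assms by (simp add: numeral_2_eq_2)
next
  case (step m)
  obtain w where w: "alt_word b a (2 * m) @ c # alt_word a c e = b # a # w"
    using step(1) by (cases m) auto
  then show ?case
    using step by simp
qed

lemma normal_not_alternating_cases:
  "normal (a # b # w) \<Longrightarrow> \<not> alternating (a # b # w) \<Longrightarrow>
   \<exists>c j n. c \<noteq> a \<and> c \<noteq> b \<and> 1 \<le> j \<and> 1 \<le> n \<and>
     (a # b # w = alt_word a b (2 * j) @ alt_word c b n \<and> rank a < rank c \<or>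
      a # b # w = alt_word a b (2 * j + 1) @ alt_word c a n \<and> rank b < rank c)"
proof (induction w arbitrary: a b)
  case Nil
  then show ?case by simp
next
  case (Cons x w)
  show ?case
  proof (cases "a = x")
    case False
    with Cons.prems(1) have "a \<noteq> b" "alternating (b # x # w)" "rank a < rank x"
      by simp_all
    moreover have "b \<noteq> x"
      using Cons.prems(1) normal_hd_neq[of b x w] by simp
    moreover have "a # b # x # w = alt_word a b 2 @ alt_word x b (Suc (length w))"
      using alternating_eq_alt_word[OF \<open>alternating (b # x # w)\<close>] by (simp add: numeral_2_eq_2)
    ultimately show ?thesis
      using False by (intro exI[of _ x] exI[of _ 1] exI[of _ "Suc (length w)"]) auto
  next
    case True
    with Cons.prems have "normal (b # a # w)" "\<not> alternating (b # a # w)"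
      by simp_all
    moreover have "a \<noteq> b"
      using Cons.prems(1) normal_hd_neq by blast
    ultimately obtain c j n where c: "c \<noteq> b" "c \<noteq> a" "1 \<le> j" "1 \<le> n" and
      shape: "b # a # w = alt_word b a (2 * j) @ alt_word c a n \<and> rank b < rank c \<or>
       b # a # w = alt_word b a (2 * j + 1) @ alt_word c b n \<and> rank a < rank c"
      using Cons.IH by blast
    from shape show ?thesis
    proof
      assume "b # a # w = alt_word b a (2 * j) @ alt_word c a n \<and> rank b < rank c"
      then have "a # b # a # w = alt_word a b (2 * j + 1) @ alt_word c a n" "rank b < rank c"
        by simp_all
      then show ?thesis
        using c True by (intro exI[of _ c] exI[of _ j] exI[of _ n]) auto
    next
      assume "b # a # w = alt_word b a (2 * j + 1) @ alt_word c b n \<and> rank a < rank c"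
      then have "a # b # a # w = alt_word a b (2 * (j + 1)) @ alt_word c b n" "rank a < rank c"
        by simp_all
      then show ?thesis
        using c True by (intro exI[of _ c] exI[of _ "j + 1"] exI[of _ n]) auto
    qed
  qed
qed

lemma prepend_alternating:
  assumes t: "t \<noteq> 0" and "a \<noteq> b" "l \<noteq> a" "l \<noteq> b" "rank b < rank l" and "2 \<le> m"
  shows "\<exists>r'. normal r' \<and> length r' = Suc m \<and> reduces_to t (l # alt_word a b m) r'"
proof -
  define n e where "n = m div 2" and "e = m mod 2"
  then have m: "m = 2 * n + e" "e \<le> 1" "1 \<le> n"
    using assms(6) by auto
  have "alt_word a b e = alt_word a l e"
    using m(2) by (cases e) auto
  then have "l # alt_word a b m = [] @ l # alt_word a b (2 * n) @ alt_word a l e"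
    using m(1) by (simp add: alt_word_add)
  then have "reduces_to t (l # alt_word a b m) (alt_word b a (2 * n) @ l # alt_word a l e)"
    using reduces_to_bubble[OF t assms(2), of l "[]" n "alt_word a l e"] assms(3,4) by auto
  moreover have "normal (alt_word b a (2 * n) @ l # alt_word a l e)"
    using normal_bubbled[of a b l n e] assms m by auto
  moreover have "length (alt_word b a (2 * n) @ l # alt_word a l e) = Suc m"
    using m by simp
  ultimately show ?thesis
    by blast
qed

lemma prepend_not_alternating:
  assumes t: "t \<noteq> 0" and "normal (a # b # w)" "\<not> alternating (a # b # w)" "l \<noteq> a" "l \<noteq> b"
  shows "(\<exists>r'. normal r' \<and> length r' = length w + 3 \<and> reduces_to t (l # a # b # w) r') \<or>
    mono (l # a # b # w) \<in> nc.span (swap_relations t)"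
proof -
  obtain c j n where c: "c \<noteq> a" "c \<noteq> b" "1 \<le> j" "1 \<le> n" and shape:
    "a # b # w = alt_word a b (2 * j) @ alt_word c b n \<and> rank a < rank c \<or>
     a # b # w = alt_word a b (2 * j + 1) @ alt_word c a n \<and> rank b < rank c"
    using normal_not_alternating_cases assms(2,3) by blast
  have "a \<noteq> b"
    using assms(2) normal_hd_neq by blast
  then have "l = c"
    using third_letter_unique assms(4,5) c(1,2) by blast
  from shape show ?thesis
  proof
    assume "a # b # w = alt_word a b (2 * j) @ alt_word c b n \<and> rank a < rank c"
    moreover obtain n' where "n = Suc n'"
      using c(4) by (cases n) auto
    ultimately have "l # a # b # w = [] @ c # alt_word a b (2 * j) @ c # alt_word b c n'"
      using \<open>l = c\<close> by simp
    then have "reduces_to t (l # a # b # w) (alt_word b a (2 * j) @ [c, c] @ alt_word b c n')"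
      using reduces_to_bubble[OF t \<open>a \<noteq> b\<close>, of c "[]" j "c # alt_word b c n'"] c by auto
    then show ?thesis
      using reduces_to_span square_in_span by blast
  next
    assume shape: "a # b # w = alt_word a b (2 * j + 1) @ alt_word c a n \<and> rank b < rank c"
    moreover have "alt_word a b (2 * j + 1) = alt_word a b (2 * j) @ [a]"
      by (simp only: alt_word_add) simp
    ultimately have "l # a # b # w = [] @ c # alt_word a b (2 * j) @ alt_word a c (Suc n)"
      using \<open>l = c\<close> by simp
    then have "reduces_to t (l # a # b # w) (alt_word b a (2 * j) @ c # alt_word a c (Suc n))"
      using reduces_to_bubble[OF t \<open>a \<noteq> b\<close>, of c "[]" j "alt_word a c (Suc n)"] c by auto
    moreover have "normal (alt_word b a (2 * j) @ c # alt_word a c (Suc n))"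
      using normal_bubbled[of a b c j "Suc n"] \<open>a \<noteq> b\<close> c shape by auto
    moreover have "length (alt_word b a (2 * j) @ c # alt_word a c (Suc n)) = length w + 3"
      using arg_cong[OF shape[THEN conjunct1], of length] by simp
    ultimately show ?thesis
      by blast
  qed
qed

lemma prepend_normal_Cons_Cons:
  assumes t: "t \<noteq> 0" and "normal (a # b # w)"
  shows "(\<exists>r'. normal r' \<and> length r' = length w + 3 \<and> reduces_to t (l # a # b # w) r') \<or>
    mono (l # a # b # w) \<in> nc.span (swap_relations t)"
proof -
  let ?r = "a # b # w"
  have normal_thesis: "normal (l # ?r) \<Longrightarrow> ?thesis"
    by (intro disjI1 exI[of _ "l # ?r"]) (simp add: reduces_to_refl)
  have "a \<noteq> b"
    using assms(2) normal_hd_neq by blast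
  consider "l = a" | "l = b" | "l \<noteq> a" "l \<noteq> b" "alternating ?r" "rank l < rank b"
    | "l \<noteq> a" "l \<noteq> b" "alternating ?r" "rank b < rank l" | "l \<noteq> a" "l \<noteq> b" "\<not> alternating ?r"
    by (metis linorder_neqE_nat rank_eq_iff)
  then show ?thesis
  proof cases
    case 1
    then show ?thesis
      using square_in_span[of "[]" a "b # w" t] by simp
  next
    case 2
    then show ?thesis
      using assms(2) by (intro normal_thesis) simp
  next
    case 3
    then show ?thesis
      using assms(2) by (intro normal_thesis) simp
  next
    case 4
    then show ?thesis
      using prepend_alternating[OF t \<open>a \<noteq> b\<close>, of l "length w + 2"] alternating_eq_alt_word
      by auto
  next
    case 5
    then show ?thesis
      using prepend_not_alternating[OF t assms(2)] by blast
  qed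
qed

lemma prepend_normal:
  assumes t: "t \<noteq> 0" and "normal r"
  shows "(\<exists>r'. normal r' \<and> length r' = Suc (length r) \<and> reduces_to t (l # r) r') \<or>
    mono (l # r) \<in> nc.span (swap_relations t)"
proof -
  consider "r = []" | a where "r = [a]" | a b w where "r = a # b # w"
    by (metis list.exhaust)
  then show ?thesis
  proof cases
    case 1
    then show ?thesis
      by (intro disjI1 exI[of _ "[l]"]) (simp add: reduces_to_refl)
  next
    case (2 a)
    show ?thesis
    proof (cases "l = a")
      case False
      then show ?thesis
        using 2 by (intro disjI1 exI[of _ "[l, a]"]) (simp add: reduces_to_refl)
    qed (use 2 square_in_span[of "[]" a "[]" t] in simp)
  next
    case (3 a b w)
    then show ?thesis
      using prepend_normal_Cons_Cons[OF t, of a b w l] assms(2) by (simp add: numeral_3_eq_3)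
  qed
qed

lemma reduces_to_normal_or_span:
  assumes t: "t \<noteq> 0"
  shows "(\<exists>r. normal r \<and> length r = length w \<and> reduces_to t w r) \<or>
    mono w \<in> nc.span (swap_relations t)"
proof (induction w)
  case Nil
  then show ?case
    using reduces_to_refl by fastforce
next
  case (Cons l w)
  then show ?case
  proof
    assume "\<exists>r. normal r \<and> length r = length w \<and> reduces_to t w r"
    then obtain r where r: "normal r" "length r = length w" "reduces_to t (l # w) (l # r)"
      using reduces_to_Cons by blast
    from prepend_normal[OF t r(1), of l] show ?thesis
      using reduces_to_trans[OF r(3)] reduces_to_span[OF r(3)] r(2) by auto
  qed (simp add: mono_Cons_span)
qed

section \<open>Dimension of the homogeneous components\<close>

lemma homog_subspace: "nc.subspace (homog k)"
  unfolding nc.subspace_def by (auto simp: homog_def nc_scale_def)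

lemma mono_in_homog: "length w = k \<Longrightarrow> mono w \<in> homog k"
  by (auto simp: homog_def mono_def)

lemma sum_fun_apply: "(\<Sum>a\<in>A. f a) x = (\<Sum>a\<in>A. f a x)"
  by (induction A rule: infinite_finite_induct) auto

lemma homog_subset_span_words: "homog k \<subseteq> nc.span (mono ` words k)"
proof
  fix p assume p: "p \<in> homog k"
  have "p = (\<Sum>w\<in>words k. nc_scale (p w) (mono w))"
  proof
    fix x
    have "(\<Sum>w\<in>words k. nc_scale (p w) (mono w)) x = (\<Sum>w\<in>words k. if w = x then p x else 0)"
      unfolding sum_fun_apply by (rule sum.cong) (auto simp: nc_scale_def mono_def)
    then show "p x = (\<Sum>w\<in>words k. nc_scale (p w) (mono w)) x"
      using p finite_words[of k] by (auto simp: words_def homog_def)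
  qed
  also have "\<dots> \<in> nc.span (mono ` words k)"
    by (intro nc.span_sum nc.span_scale nc.span_base) auto
  finally show "p \<in> nc.span (mono ` words k)" .
qed

definition normal_words :: "nat \<Rightarrow> gen list set" where
  "normal_words k = {w. length w = k \<and> normal w}"

lemma finite_normal_words: "finite (normal_words k)"
  using finite_words[of k] by (rule finite_subset[rotated]) (auto simp: normal_words_def words_def)

lemma homog_subset_span_normal_words:
  assumes "t \<noteq> 0"
  shows "homog k \<subseteq> nc.span (nc.span (swap_relations t) \<union> mono ` normal_words k)"
proof -
  let ?S = "nc.span (nc.span (swap_relations t) \<union> mono ` normal_words k)"
  have "mono w \<in> ?S" if k: "length w = k" for w
    using reduces_to_normal_or_span[OF assms, of w]
  proof
    assume "\<exists>r. normal r \<and> length r = length w \<and> reduces_to t w r"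
    then obtain r \<sigma> where "r \<in> normal_words k"
      and "mono w - nc_scale \<sigma> (mono r) \<in> nc.span (swap_relations t)"
      using k unfolding reduces_to_def normal_words_def by auto
    then have "mono w - nc_scale \<sigma> (mono r) \<in> ?S" "mono r \<in> ?S"
      by (auto intro: nc.span_base)
    then show ?thesis
      by (metis diff_add_cancel nc.span_add nc.span_scale)
  qed (auto intro: nc.span_base)
  then have "nc.span (mono ` words k) \<subseteq> ?S"
    by (intro nc.span_minimal nc.subspace_span) (auto simp: words_def)
  then show ?thesis
    using homog_subset_span_words by blast
qed

lemma quot_graded_dim_M_ideal:
  assumes "\<omega> ^ 3 = 1" and "\<omega> \<noteq> 1" and t: "t \<noteq> 0"
  shows "quot_graded_dim (M_ideal \<omega> t) k = card (normal_words k)"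
proof -
  have "nc.dim (homog k) = nc.dim (nc.span (swap_relations t) \<inter> homog k) + card (normal_words k)"
  proof (rule nc.dim_eq_dim_inter_add_card[where W = "mono ` words k" and \<Phi> = "dual_functional t"])
    show "mono ` normal_words k \<subseteq> homog k"
      by (auto simp: normal_words_def mono_in_homog)
    show "\<And>r x. r \<in> normal_words k \<Longrightarrow> x \<in> nc.span (swap_relations t) \<Longrightarrow> dual_functional t r x = 0"
      using dual_functional_span_swap_relations[OF t] normal_separated
      by (auto simp: normal_words_def)
    show "\<And>r r'. r \<in> normal_words k \<Longrightarrow> r' \<in> normal_words k \<Longrightarrow> r' \<noteq> r \<Longrightarrow>
        dual_functional t r (mono r') = 0"
      by (auto simp: normal_words_def dual_functional_normal)
  qed (use homog_subspace finite_normal_words finite_words homog_subset_span_words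
      homog_subset_span_normal_words[OF t] dual_functional_add dual_functional_scale
      dual_functional_self[OF t] in auto)
  then show ?thesis
    unfolding quot_graded_dim_def nc_dim_eq M_ideal_eq_span_swap_relations[OF assms(1,2)] by simp
qed

section \<open>Counting normal words\<close>

lemma normal_words_0: "normal_words 0 = {[]}"
  by (auto simp: normal_words_def)

lemma normal_words_1: "normal_words 1 = {[X], [Y], [Z]}"
  by (auto simp: normal_words_def length_Suc_conv intro: gen.exhaust)

lemma normal_words_2: "normal_words 2 = {[X, Y], [X, Z], [Y, X], [Y, Z], [Z, X], [Z, Y]}"
proof -
  have "w \<in> normal_words 2 \<longleftrightarrow> w \<in> {[X, Y], [X, Z], [Y, X], [Y, Z], [Z, X], [Z, Y]}" for w
  proof
    assume "w \<in> normal_words 2"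
    then obtain a b where "w = [a, b]" "a \<noteq> b"
      by (auto simp: normal_words_def length_Suc_conv numeral_2_eq_2)
    then show "w \<in> {[X, Y], [X, Z], [Y, X], [Y, Z], [Z, X], [Z, Y]}"
      by (cases a; cases b) auto
  qed (auto simp: normal_words_def)
  then show ?thesis
    by blast
qed

lemma card_normal_words_Suc:
  "card (normal_words (Suc k)) = (\<Sum>r\<in>normal_words k. card {l. normal (l # r)})"
proof -
  have "normal_words (Suc k) = (\<lambda>(r, l). l # r) ` (SIGMA r:normal_words k. {l. normal (l # r)})"
    by (auto simp: normal_words_def length_Suc_conv image_iff intro: normal_Cons)
  moreover have "inj_on (\<lambda>(r, l). l # r) (SIGMA r:normal_words k. {l. normal (l # r)})"
    by (auto simp: inj_on_def)
  moreover have "finite {l :: gen. normal (l # r)}" for r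
    by (rule finite_subset[OF subset_UNIV]) (simp add: UNIV_gen)
  ultimately show ?thesis
    using finite_normal_words by (simp add: card_image card_SigmaI)
qed

lemma card_gen_Collect: "card {l :: gen. P l} = length (filter P [X, Y, Z])"
proof -
  have "{l. P l} = set (filter P [X, Y, Z])"
  proof (rule set_eqI)
    fix l
    show "l \<in> {l. P l} \<longleftrightarrow> l \<in> set (filter P [X, Y, Z])"
      by (cases l) auto
  qed
  then show ?thesis
    by (simp add: distinct_card)
qed

lemma card_extensions:
  assumes "normal (a # b # w)"
  shows "card {l. normal (l # a # b # w)} =
    (if alternating (a # b # w) \<and> (a, b) \<in> {(X, Z), (Y, Z), (Z, Y)} then 2 else 1)"
  using assms normal_hd_neq[OF assms]
  by (cases a; cases b; cases "alternating (a # b # w)") (simp_all add: card_gen_Collect)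

lemma normal_alternating_rising:
  "{r \<in> normal_words (Suc (Suc m)). alternating r \<and> (hd r, hd (tl r)) \<in> {(X, Z), (Y, Z), (Z, Y)}}
    = {alt_word X Z (Suc (Suc m)), alt_word Y Z (Suc (Suc m)), alt_word Z Y (Suc (Suc m))}"
  (is "?A = ?B")
proof
  show "?A \<subseteq> ?B"
  proof
    fix r assume "r \<in> ?A"
    then obtain a b w where "r = a # b # w" "length w = m" "alternating r"
      "(a, b) \<in> {(X, Z), (Y, Z), (Z, Y)}"
      by (auto simp: normal_words_def length_Suc_conv)
    then show "r \<in> ?B"
      using alternating_eq_alt_word[of a b w] by (auto simp: numeral_2_eq_2)
  qed
  show "?B \<subseteq> ?A"
    using normal_alt_word[of X Z "Suc (Suc m)", simplified]
      normal_alt_word[of Y Z "Suc (Suc m)", simplified]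
      normal_alt_word[of Z Y "Suc (Suc m)", simplified]
    by (auto simp: normal_words_def)
qed

lemma card_normal_words_step:
  "card (normal_words (Suc (Suc (Suc m)))) = card (normal_words (Suc (Suc m))) + 3"
proof -
  let ?N = "normal_words (Suc (Suc m))"
  let ?P = "\<lambda>r. alternating r \<and> (hd r, hd (tl r)) \<in> {(X, Z), (Y, Z), (Z, Y)}"
  have "card {l. normal (l # r)} = 1 + (if ?P r then 1 else 0)" if r_in: "r \<in> ?N" for r
  proof -
    obtain a b w where r: "r = a # b # w"
      using r_in by (auto simp: normal_words_def length_Suc_conv)
    then have ab: "normal (a # b # w)"
      using r_in by (simp add: normal_words_def)
    show ?thesis
      unfolding r card_extensions[OF ab] by simp
  qed
  then have "card (normal_words (Suc (Suc (Suc m)))) = (\<Sum>r\<in>?N. 1 + (if ?P r then 1 else 0))"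
    unfolding card_normal_words_Suc[of "Suc (Suc m)"] by (rule sum.cong[OF refl])
  also have "\<dots> = card ?N + card {r \<in> ?N. ?P r}"
    using finite_normal_words[of "Suc (Suc m)"]
    by (simp only: sum.distrib card_eq_sum sum.inter_filter)
  also have "card {r \<in> ?N. ?P r} = 3"
    unfolding normal_alternating_rising by simp
  finally show ?thesis .
qed

lemma card_normal_words: "card (normal_words k) = (if k = 0 then 1 else 3 * k)"
proof -
  have "card (normal_words (Suc (Suc m))) = 3 * Suc (Suc m)" for m
    by (induction m)
      (simp_all add: normal_words_2[simplified numeral_2_eq_2] card_normal_words_step)
  then show ?thesis
    by (cases k; cases "k - 1") (auto simp: normal_words_0 normal_words_1[unfolded One_nat_def])
qed

lemma fps_linear_growth_eq:
  "Abs_fps (\<lambda>k. of_nat (if k = 0 then 1 else 3 * k) :: 'a :: field)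
    = (1 - fps_X ^ 3) / (1 - fps_X) ^ 3"
proof -
  define A :: "'a fps" where "A = Abs_fps (\<lambda>k. of_nat (if k = 0 then 1 else 3 * k))"
  have "A * (1 - fps_X) = Abs_fps (\<lambda>k. if k = 0 then 1 else if k = 1 then 2 else 3)"
    by (rule fps_ext) (auto simp: A_def algebra_simps numeral_eq_Suc split: nat.split)
  also have "\<dots> * (1 - fps_X) = Abs_fps (\<lambda>k. if k \<le> 2 then 1 else 0)"
    by (rule fps_ext) (auto simp: algebra_simps numeral_eq_Suc split: nat.split)
  also have "\<dots> * (1 - fps_X) = 1 - fps_X ^ 3"
    by (rule fps_ext) (auto simp: algebra_simps fps_X_power_iff numeral_eq_Suc split: nat.split)
  finally have "A * (1 - fps_X) ^ 3 = 1 - fps_X ^ 3"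
    by (simp add: power3_eq_cube mult.assoc)
  moreover have "(1 - fps_X) ^ 3 \<noteq> (0 :: 'a fps)"
  proof
    assume "(1 - fps_X) ^ 3 = (0 :: 'a fps)"
    then have "fps_nth (1 - fps_X) 0 = fps_nth (0 :: 'a fps) 0"
      by simp
    then show False
      by simp
  qed
  ultimately show ?thesis
    unfolding A_def by (metis nonzero_mult_div_cancel_right)
qed

theorem mainTheorem10:
  fixes \<omega> t :: complex
  assumes "\<omega> ^ 3 = 1" and "\<omega> \<noteq> 1" and "t \<noteq> 0"
  shows "hilbert_series (M_ideal \<omega> t) = (1 - fps_X ^ 3) / (1 - fps_X) ^ 3"
  unfolding hilbert_series_def quot_graded_dim_M_ideal[OF assms] card_normal_words
  by (rule fps_linear_growth_eq)

end
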